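(* Let $X$ be the random variable with $\Pr\{X=n\}=q^{n^{2}}/\theta_{3}(q)$, $n\in\mathbb{Z}$, and let $\kappa_{n}$ be its cumulants. Then $\kappa_{2n+1}=0$ for all $n\ge0$, and for all $n\ge1$ \[ \kappa_{2n}=\sum_{m\ge1}\frac{(-1)^{m-1}m^{2n-1}}{\sinh(c m\pi)}, \] where $c=K(k')/K(k)$.
   Context: For $k\in(0,1)$, $k'=\sqrt{1-k^{2}}$, $K(k)=\int_{0}^{1}\frac{dt}{\sqrt{1-t^{2}}\sqrt{1-k^{2}t^{2}}}$, $q=e^{-\pi K(k')/K(k)}=e^{-\pi c}$ and $\theta_{3}(q)=\sum_{p\in\mathbb{Z}}q^{p^{2}}$. The cumulants $\kappa_{n}$ are defined by $\log\mathbb{E}e^{uX}=\sum_{n\ge1}\kappa_{n}\frac{u^{n}}{n!}$. *)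

theory Defs
  imports "HOL-Analysis.Analysis"
begin

definition ellK :: "real \<Rightarrow> real" where
  "ellK k = integral {0..1} (\<lambda>t. 1 / (sqrt (1 - t\<^sup>2) * sqrt (1 - k\<^sup>2 * t\<^sup>2)))"

definition theta3 :: "real \<Rightarrow> real" where
  "theta3 q = (\<Sum>\<^sub>\<infinity>p\<in>(UNIV::int set). q ^ nat (p\<^sup>2))"

definition theta_pmf :: "real \<Rightarrow> int \<Rightarrow> real" where
  "theta_pmf q n = q ^ nat (n\<^sup>2) / theta3 q"

definition theta_mgf :: "real \<Rightarrow> real \<Rightarrow> real" where
  "theta_mgf q u = (\<Sum>\<^sub>\<infinity>n\<in>(UNIV::int set). theta_pmf q n * exp (u * of_int n))"

definition theta_cumulant :: "real \<Rightarrow> nat \<Rightarrow> real" where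
  "theta_cumulant q n = (deriv ^^ n) (\<lambda>u. ln (theta_mgf q u)) 0"

end

theory Submission
  imports Defs
begin

(* Put q = exp (-\<delta>) with \<delta> = \<pi> c. The moment generating function is \<Theta>(u) / \<Theta>(0) for the
   two-sided series \<Theta>(u) = \<Sum>_j exp (-\<delta> j^2 + j u), whose logarithmic derivative is
   S(u) = \<Sum>_j s_j exp (j u) with s_j = (-1)^(j+1) / (2 sinh (\<delta> j)). To see \<Theta> S = \<Theta>', note that
   A(N) = \<Sum>_j s_j exp (-\<delta> (N - j)^2) satisfies exp (\<delta> (N+1)^2) A(N+1) = exp (\<delta> N^2) A(N) + 1:
   this follows from s_j (exp (2 \<delta> j) - 1) = -(-1)^j exp (\<delta> j) + [j = 0] and an alternating
   sum that cancels under j \<mapsto> 2N + 1 - j. Hence A(N) = N exp (-\<delta> N^2). So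
   \<kappa>_(n+1) = S^(n)(0) = \<Sum>_j j^n s_j, which vanishes for even n because s is odd and, for odd n,
   is twice the sum over j \<ge> 1. *)

section \<open>Sums over the integers\<close>

lemma summable_on_real_if_abs_le:
  fixes f g :: "'a \<Rightarrow> real"
  assumes "g summable_on A" "\<And>x. x \<in> A \<Longrightarrow> \<bar>f x\<bar> \<le> g x"
  shows "f summable_on A"
proof -
  have "(\<lambda>x. norm (f x)) summable_on A"
    using Infinite_Sum.abs_summable_on_comparison_test'[of g A f] assms by simp
  then show ?thesis using summable_on_iff_abs_summable_on_real by blast
qed

lemma UNIV_int_eq_nonneg_Un_neg: "(UNIV :: int set) = range int \<union> range (\<lambda>n. - int (Suc n))"
proof -
  have "j \<in> range int \<union> range (\<lambda>n. - int (Suc n))" for j :: int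
    by (cases j rule: int_cases) auto
  then show ?thesis by blast
qed

lemma range_int_Int_range_neg_int: "range int \<inter> range (\<lambda>n. - int (Suc n)) = {}"
  by auto

lemma summable_on_int_sums:
  fixes g :: "int \<Rightarrow> real"
  assumes "g summable_on UNIV"
  shows "(\<lambda>n. g (int n) + g (- int (Suc n))) sums infsum g UNIV"
proof -
  let ?neg = "\<lambda>n. - int (Suc n)"
  have sum_pos: "g summable_on range int" and sum_neg: "g summable_on range ?neg"
    using assms summable_on_subset_banach by blast+
  have "((g \<circ> int) has_sum infsum g (range int)) UNIV"
    using has_sum_infsum[OF sum_pos] has_sum_reindex[of int UNIV g] by simp
  then have pos: "(\<lambda>n. g (int n)) sums infsum g (range int)"
    by (simp add: o_def has_sum_imp_sums)
  have "((g \<circ> ?neg) has_sum infsum g (range ?neg)) UNIV"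
    using has_sum_infsum[OF sum_neg] has_sum_reindex[of ?neg UNIV g] by (simp add: inj_def)
  then have neg: "(\<lambda>n. g (?neg n)) sums infsum g (range ?neg)"
    by (simp add: o_def has_sum_imp_sums)
  have "infsum g UNIV = infsum g (range int) + infsum g (range ?neg)"
    using infsum_Un_disjoint[OF sum_pos sum_neg range_int_Int_range_neg_int] UNIV_int_eq_nonneg_Un_neg
    by simp
  then show ?thesis using sums_add[OF pos neg] by simp
qed

lemma summable_on_int_exp_decay:
  fixes \<epsilon> :: real
  assumes "\<epsilon> > 0"
  shows "(\<lambda>j::int. exp (- \<epsilon> * \<bar>of_int j\<bar>)) summable_on UNIV"
proof -
  let ?f = "\<lambda>j::int. exp (- \<epsilon> * \<bar>of_int j\<bar>)"
  have geom: "summable (\<lambda>n. exp (- \<epsilon>) ^ n)"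
    using assms by (intro summable_geometric) simp
  then have "summable (\<lambda>n. ?f (int n))"
    by (simp add: exp_of_nat_mult[symmetric] mult.commute)
  then have "(?f \<circ> int) summable_on UNIV"
    by (subst summable_on_UNIV_nonneg_real_iff) (auto simp: o_def)
  then have pos: "?f summable_on range int"
    using summable_on_reindex[of int UNIV ?f] by simp
  have "summable (\<lambda>n. exp (- \<epsilon>) * exp (- \<epsilon>) ^ n)"
    using geom by (rule summable_mult)
  then have "summable (\<lambda>n. ?f (- int (Suc n)))"
    by (simp add: exp_of_nat_mult[symmetric] exp_add[symmetric] algebra_simps)
  then have "(?f \<circ> (\<lambda>n. - int (Suc n))) summable_on UNIV"
    by (subst summable_on_UNIV_nonneg_real_iff) (auto simp: o_def)
  then have neg: "?f summable_on range (\<lambda>n. - int (Suc n))"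
    using summable_on_reindex[of "\<lambda>n. - int (Suc n)" UNIV ?f] by (simp add: inj_def)
  show ?thesis
    using summable_on_Un_disjoint[OF pos neg range_int_Int_range_neg_int] UNIV_int_eq_nonneg_Un_neg
    by simp
qed

lemma summable_on_int_if_exp_bound:
  fixes g :: "int \<Rightarrow> real"
  assumes "\<epsilon> > 0" "\<And>j. \<bar>g j\<bar> \<le> C * exp (- \<epsilon> * \<bar>of_int j\<bar>)"
  shows "g summable_on UNIV"
  by (rule summable_on_real_if_abs_le[OF summable_on_cmult_right[OF summable_on_int_exp_decay]])
     (use assms in auto)

lemma infsum_eq_0_if_antisymmetric:
  fixes g :: "'a::ab_group_add \<Rightarrow> real"
  assumes "\<And>j. g (a - j) = - g j"
  shows "infsum g UNIV = 0"
proof -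
  have "infsum g UNIV = infsum (\<lambda>j. - g j) UNIV"
  proof (rule infsum_reindex_bij_witness[of UNIV "\<lambda>j. a - j" "\<lambda>j. a - j"])
    show "- g (a - j) = g j" for j
      using assms[of j] by simp
  qed auto
  also have "\<dots> = - infsum g UNIV" by (rule infsum_uminus)
  finally show ?thesis by simp
qed

lemma infsum_int_even:
  fixes g :: "int \<Rightarrow> real"
  assumes "g summable_on UNIV" "\<And>j. g (- j) = g j" "g 0 = 0"
  shows "infsum g UNIV = 2 * (\<Sum>\<^sub>\<infinity>m\<in>{1::nat..}. g (int m))"
proof -
  define P where "P = int ` {1..}"
  define M where "M = (\<lambda>m. - int m) ` {1..}"
  have "UNIV - (P \<union> M) = {0}"
  proof -
    have "j \<in> P \<union> M" if "j \<noteq> 0" for j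
      using that unfolding P_def M_def
      by (cases j rule: int_cases) (auto intro!: image_eqI[where x = "nat \<bar>j\<bar>"])
    then show ?thesis unfolding P_def M_def by auto
  qed
  then have "infsum g UNIV = infsum g (P \<union> M)"
    by (intro infsum_cong_neutral) (auto simp: assms(3))
  also have "\<dots> = infsum g P + infsum g M"
    by (rule infsum_Un_disjoint) (auto simp: P_def M_def intro: summable_on_subset_banach[OF assms(1)])
  also have "infsum g P = (\<Sum>\<^sub>\<infinity>m\<in>{1::nat..}. g (int m))"
    unfolding P_def by (subst infsum_reindex) (auto simp: o_def)
  also have "infsum g M = (\<Sum>\<^sub>\<infinity>m\<in>{1::nat..}. g (int m))"
    unfolding M_def by (subst infsum_reindex) (auto simp: o_def inj_on_def assms(2))
  finally show ?thesis by simp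
qed

lemma infsum_mult_eq_infsum_convolution:
  fixes f g :: "'a::ab_group_add \<Rightarrow> real"
  assumes f: "f summable_on UNIV" and g: "g summable_on UNIV"
  shows "infsum f UNIV * infsum g UNIV = (\<Sum>\<^sub>\<infinity>n. \<Sum>\<^sub>\<infinity>j. f (n - j) * g j)"
proof -
  define F where "F = (\<lambda>(i, j). f i * g j)"
  have abs_f: "(\<lambda>i. \<bar>f i\<bar>) summable_on UNIV" and abs_g: "(\<lambda>j. \<bar>g j\<bar>) summable_on UNIV"
    using f g summable_on_iff_abs_summable_on_real by auto
  have "(\<lambda>p. norm (F p)) summable_on UNIV \<times> UNIV"
  proof (subst Infinite_Sum.abs_summable_on_Sigma_iff, intro conjI ballI)
    show "(\<lambda>j. norm (F (i, j))) summable_on UNIV" for i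
      using summable_on_cmult_right[OF abs_g, of "\<bar>f i\<bar>"] by (simp add: F_def abs_mult)
    have "(\<Sum>\<^sub>\<infinity>j. norm (F (i, j))) = \<bar>f i\<bar> * (\<Sum>\<^sub>\<infinity>j. \<bar>g j\<bar>)" for i
      by (simp add: F_def abs_mult infsum_cmult_right')
    then show "(\<lambda>i. norm (\<Sum>\<^sub>\<infinity>j. norm (F (i, j)))) summable_on UNIV"
      using summable_on_cmult_left[OF abs_f] by (simp add: infsum_nonneg)
  qed
  then have sum_F: "F summable_on UNIV"
    using summable_on_iff_abs_summable_on_real by auto
  have "infsum f UNIV * infsum g UNIV = (\<Sum>\<^sub>\<infinity>i. \<Sum>\<^sub>\<infinity>j. F (i, j))"
    by (simp add: F_def infsum_cmult_left' infsum_cmult_right')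
  also have "\<dots> = infsum F UNIV"
    using infsum_Sigma_banach[of F UNIV "\<lambda>_. UNIV"] sum_F by simp
  also have "\<dots> = infsum (\<lambda>(n, j). F (n - j, j)) UNIV"
    by (rule infsum_reindex_bij_witness[of UNIV "\<lambda>(n, j). (n - j, j)" "\<lambda>(i, j). (i + j, j)"]) auto
  also have "\<dots> = (\<Sum>\<^sub>\<infinity>n. \<Sum>\<^sub>\<infinity>j. F (n - j, j))"
  proof -
    have "(\<lambda>(n, j). F (n - j, j)) summable_on UNIV"
      using sum_F summable_on_reindex_bij_witness[of UNIV "\<lambda>(n, j). (n - j, j)"
          "\<lambda>(i, j). (i + j, j)" UNIV "\<lambda>(n, j). F (n - j, j)" F]
      by auto
    then show ?thesis
      using infsum_Sigma_banach[of "\<lambda>(n, j). F (n - j, j)" UNIV "\<lambda>_. UNIV"] by simp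
  qed
  finally show ?thesis by (simp add: F_def)
qed

section \<open>Exponential series on a strip\<close>

definition exp_series :: "(int \<Rightarrow> real) \<Rightarrow> real \<Rightarrow> real" where
  "exp_series a u = (\<Sum>\<^sub>\<infinity>j. a j * exp (of_int j * u))"

definition strip_summable :: "real \<Rightarrow> (int \<Rightarrow> real) \<Rightarrow> bool" where
  "strip_summable \<delta> a \<longleftrightarrow>
     (\<forall>\<rho>. 0 \<le> \<rho> \<and> \<rho> < \<delta> \<longrightarrow> (\<lambda>j. \<bar>a j\<bar> * exp (\<rho> * \<bar>of_int j\<bar>)) summable_on UNIV)"

lemma abs_mult_exp_le:
  fixes b x \<rho> :: real
  assumes "\<bar>x\<bar> \<le> \<rho>"
  shows "\<bar>b * exp (of_int j * x)\<bar> \<le> \<bar>b\<bar> * exp (\<rho> * \<bar>of_int j\<bar>)"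
proof -
  have "of_int j * x \<le> \<bar>of_int j\<bar> * \<bar>x\<bar>"
    by (metis abs_ge_self abs_mult)
  also have "\<dots> \<le> \<rho> * \<bar>of_int j\<bar>"
    using assms by (simp add: mult.commute mult_right_mono)
  finally show ?thesis by (simp add: abs_mult mult_left_mono)
qed

lemma strip_summable_summable_on:
  assumes "strip_summable \<delta> a" "\<bar>u\<bar> < \<delta>"
  shows "(\<lambda>j. a j * exp (of_int j * u)) summable_on UNIV"
  by (rule summable_on_real_if_abs_le[of "\<lambda>j. \<bar>a j\<bar> * exp (\<bar>u\<bar> * \<bar>of_int j\<bar>)"])
     (use assms abs_mult_exp_le in \<open>auto simp: strip_summable_def\<close>)

lemma strip_summable_if_exp_bound:
  assumes "\<And>j. \<bar>a j\<bar> \<le> C * exp (- \<delta> * \<bar>of_int j\<bar>)"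
  shows "strip_summable \<delta> a"
  unfolding strip_summable_def
proof (intro allI impI)
  fix \<rho> :: real
  assume \<rho>: "0 \<le> \<rho> \<and> \<rho> < \<delta>"
  show "(\<lambda>j. \<bar>a j\<bar> * exp (\<rho> * \<bar>of_int j\<bar>)) summable_on UNIV"
  proof (rule summable_on_int_if_exp_bound[of "\<delta> - \<rho>" _ C])
    fix j :: int
    have "\<bar>a j\<bar> * exp (\<rho> * \<bar>of_int j\<bar>) \<le> C * exp (- \<delta> * \<bar>of_int j\<bar>) * exp (\<rho> * \<bar>of_int j\<bar>)"
      using assms by (rule mult_right_mono) simp
    also have "\<dots> = C * exp (- (\<delta> - \<rho>) * \<bar>of_int j\<bar>)"
      by (simp add: exp_add[symmetric] algebra_simps)
    finally show "\<bar>\<bar>a j\<bar> * exp (\<rho> * \<bar>of_int j\<bar>)\<bar> \<le> C * exp (- (\<delta> - \<rho>) * \<bar>of_int j\<bar>)"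
      by simp
  qed (use \<rho> in simp)
qed

lemma strip_summable_index_mult:
  assumes "strip_summable \<delta> a"
  shows "strip_summable \<delta> (\<lambda>j. of_int j * a j)"
  unfolding strip_summable_def
proof (intro allI impI)
  fix \<rho> :: real
  assume \<rho>: "0 \<le> \<rho> \<and> \<rho> < \<delta>"
  define t where "t = (\<delta> - \<rho>) / 2"
  have t: "t > 0" "\<rho> + t < \<delta>" using \<rho> by (simp_all add: t_def field_simps)
  have "(\<lambda>j. \<bar>a j\<bar> * exp ((\<rho> + t) * \<bar>of_int j\<bar>)) summable_on UNIV"
    using assms \<rho> t unfolding strip_summable_def by simp
  then have sum: "(\<lambda>j. inverse t * (\<bar>a j\<bar> * exp ((\<rho> + t) * \<bar>of_int j\<bar>))) summable_on UNIV"
    by (rule summable_on_cmult_right)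
  show "(\<lambda>j. \<bar>of_int j * a j\<bar> * exp (\<rho> * \<bar>of_int j\<bar>)) summable_on UNIV"
  proof (rule summable_on_real_if_abs_le[OF sum])
    fix j :: int
    \<comment> \<open>the polynomial factor is absorbed by the spare exponential decay\<close>
    have "t * \<bar>of_int j\<bar> \<le> exp (t * \<bar>of_int j\<bar>)"
      using exp_ge_add_one_self[of "t * \<bar>of_int j\<bar>"] by linarith
    then have "\<bar>of_int j :: real\<bar> \<le> exp (t * \<bar>of_int j\<bar>) / t"
      using t by (simp add: field_simps)
    then have "\<bar>of_int j :: real\<bar> * (\<bar>a j\<bar> * exp (\<rho> * \<bar>of_int j\<bar>))
        \<le> exp (t * \<bar>of_int j\<bar>) / t * (\<bar>a j\<bar> * exp (\<rho> * \<bar>of_int j\<bar>))"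
      by (rule mult_right_mono) simp
    also have "\<dots> = inverse t * (\<bar>a j\<bar> * exp ((\<rho> + t) * \<bar>of_int j\<bar>))"
      by (simp add: distrib_right exp_add field_simps)
    finally show "\<bar>\<bar>of_int j * a j\<bar> * exp (\<rho> * \<bar>of_int j\<bar>)\<bar> \<le> inverse t * (\<bar>a j\<bar> * exp ((\<rho> + t) * \<bar>of_int j\<bar>))"
      by (simp add: abs_mult mult_ac)
  qed
qed

lemma strip_summable_index_power:
  assumes "strip_summable \<delta> a"
  shows "strip_summable \<delta> (\<lambda>j. of_int j ^ k * a j)"
proof (induction k)
  case (Suc k)
  then show ?case
    using strip_summable_index_mult[OF Suc.IH] by (simp add: mult.assoc)
qed (use assms in simp)

lemma has_real_derivative_exp_series:
  assumes a: "strip_summable \<delta> a" and u: "\<bar>u\<bar> < \<delta>"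
  shows "(exp_series a has_real_derivative exp_series (\<lambda>j. of_int j * a j) u) (at u)"
proof -
  define \<rho> where "\<rho> = (\<bar>u\<bar> + \<delta>) / 2"
  have \<rho>: "\<bar>u\<bar> < \<rho>" "\<rho> < \<delta>" "0 < \<delta>" using u by (auto simp: \<rho>_def)
  define b where "b = (\<lambda>j. of_int j * a j)"
  have b: "strip_summable \<delta> b" unfolding b_def by (rule strip_summable_index_mult[OF a])
  \<comment> \<open>termwise differentiation is available for series over nat, so pair the indices n and -n-1\<close>
  define pair where "pair = (\<lambda>(c :: int \<Rightarrow> real) n (x :: real). c (int n) * exp (of_int (int n) * x)
    + c (- int (Suc n)) * exp (of_int (- int (Suc n)) * x))"
  have sums: "(\<lambda>n. pair c n x) sums exp_series c x" if "strip_summable \<delta> c" "\<bar>x\<bar> < \<delta>" for c x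
    using summable_on_int_sums[OF strip_summable_summable_on[OF that]]
    unfolding pair_def exp_series_def .
  have deriv_pair: "(pair a n has_field_derivative pair b n x) (at x within cball 0 \<rho>)"
    if "x \<in> cball 0 \<rho>" for n x
    unfolding pair_def b_def by (rule derivative_eq_intros refl | simp)+
  define g where "g = (\<lambda>j. \<bar>b j\<bar> * exp (\<rho> * \<bar>of_int j\<bar>))"
  have "g summable_on UNIV"
    using b \<rho> unfolding strip_summable_def g_def by auto
  then have summable_M: "summable (\<lambda>n. g (int n) + g (- int (Suc n)))"
    by (rule sums_summable[OF summable_on_int_sums])
  have "norm (pair b n x) \<le> g (int n) + g (- int (Suc n))" if "x \<in> cball 0 \<rho>" for n x
    unfolding pair_def g_def real_norm_def
    by (intro order_trans[OF abs_triangle_ineq add_mono] abs_mult_exp_le) (use that in auto)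
  then have uniform: "uniformly_convergent_on (cball 0 \<rho>) (\<lambda>n x. \<Sum>i<n. pair b i x)"
    by (rule Weierstrass_m_test'[OF _ summable_M])
  have summable_0: "summable (\<lambda>n. pair a n 0)"
    using sums[OF a, of 0] \<rho>(3) by (auto intro: sums_summable)
  have series: "((\<lambda>x. \<Sum>n. pair a n x) has_field_derivative (\<Sum>n. pair b n u)) (at u)"
    by (rule has_field_derivative_series'(2)[OF convex_cball deriv_pair uniform _ summable_0])
       (use \<rho> in auto)
  have sum_eq: "(\<Sum>n. pair a n x) = exp_series a x" if "x \<in> ball 0 \<delta>" for x
    using sums[OF a, of x] that by (simp add: sums_iff)
  have "(exp_series a has_field_derivative (\<Sum>n. pair b n u)) (at u)"
    by (rule has_field_derivative_transform_within_open[OF series, of "ball 0 \<delta>"])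
       (use u sum_eq in auto)
  then show ?thesis
    using sums[OF b u] by (simp add: sums_iff b_def)
qed

lemma higher_deriv_exp_series:
  assumes "strip_summable \<delta> a" "\<bar>u\<bar> < \<delta>"
  shows "(deriv ^^ n) (exp_series a) u = exp_series (\<lambda>j. of_int j ^ n * a j) u"
  using assms(2)
proof (induction n arbitrary: u)
  case (Suc n)
  have "eventually (\<lambda>x. x \<in> ball 0 \<delta>) (nhds u)"
    using Suc.prems by (intro eventually_nhds_in_open) auto
  then have "eventually (\<lambda>x. (deriv ^^ n) (exp_series a) x = exp_series (\<lambda>j. of_int j ^ n * a j) x) (nhds u)"
    by eventually_elim (use Suc.IH in simp)
  then have "(deriv ^^ Suc n) (exp_series a) u = deriv (exp_series (\<lambda>j. of_int j ^ n * a j)) u"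
    using deriv_cong_ev[OF _ refl] by simp
  also have "\<dots> = exp_series (\<lambda>j. of_int j * (of_int j ^ n * a j)) u"
    by (rule DERIV_imp_deriv has_real_derivative_exp_series
        strip_summable_index_power[OF assms(1)] Suc.prems)+
  finally show ?case by (simp add: mult.assoc)
qed simp

section \<open>The theta series and its logarithmic derivative\<close>

definition theta_coeff :: "real \<Rightarrow> int \<Rightarrow> real" where
  "theta_coeff \<delta> j = exp (- \<delta> * of_int j ^ 2)"

definition alt_sign :: "int \<Rightarrow> real" where
  "alt_sign j = (-1) ^ nat \<bar>j\<bar>"

lemma alt_sign_eq: "alt_sign j = (if even j then 1 else -1)"
  unfolding alt_sign_def minus_one_power_iff by (simp add: even_nat_iff)

lemma alt_sign_minus [simp]: "alt_sign (- j) = alt_sign j"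
  by (simp add: alt_sign_eq)

lemma abs_alt_sign [simp]: "\<bar>alt_sign j\<bar> = 1"
  by (simp add: alt_sign_eq)

text \<open>The coefficients of \<open>\<Theta>'/\<Theta>\<close>, where \<open>\<Theta>\<close> is the exponential series of
  \<open>theta_coeff \<delta>\<close>; the junk value \<open>x / 0 = 0\<close> gives the correct coefficient at \<open>j = 0\<close>.\<close>
definition logderiv_coeff :: "real \<Rightarrow> int \<Rightarrow> real" where
  "logderiv_coeff \<delta> j = - alt_sign j / (2 * sinh (\<delta> * of_int j))"

lemma logderiv_coeff_0 [simp]: "logderiv_coeff \<delta> 0 = 0"
  by (simp add: logderiv_coeff_def)

lemma logderiv_coeff_minus: "logderiv_coeff \<delta> (- j) = - logderiv_coeff \<delta> j"
  by (simp add: logderiv_coeff_def)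

lemma inverse_two_sinh_le:
  fixes \<delta> x :: real
  assumes "\<delta> > 0" "x \<ge> \<delta>"
  shows "1 / (2 * sinh x) \<le> exp (- x) / (1 - exp (- 2 * \<delta>))"
proof -
  have "exp (- x) * (exp x - exp (- x)) = 1 - exp (- 2 * x)"
    by (simp add: right_diff_distrib exp_minus_inverse flip: exp_add)
  moreover have "exp (- 2 * x) \<le> exp (- 2 * \<delta>)" "exp (- 2 * \<delta>) < 1" "exp (- x) < exp x"
    using assms by simp_all
  ultimately have "1 - exp (- 2 * \<delta>) \<le> exp (- x) * (exp x - exp (- x))"
    by simp
  then show ?thesis
    using \<open>exp (- 2 * \<delta>) < 1\<close> \<open>exp (- x) < exp x\<close> by (simp add: sinh_def field_simps)
qed

lemma abs_logderiv_coeff_le: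
  assumes "\<delta> > 0"
  shows "\<bar>logderiv_coeff \<delta> j\<bar> \<le> 1 / (1 - exp (- 2 * \<delta>)) * exp (- \<delta> * \<bar>of_int j\<bar>)"
proof (cases "j = 0")
  case True
  then show ?thesis using assms by simp
next
  case False
  then have "\<delta> \<le> \<delta> * \<bar>of_int j\<bar>"
    using assms by (simp add: mult_le_cancel_left1 del: of_int_abs)
  moreover have "\<bar>sinh (\<delta> * of_int j)\<bar> = sinh (\<delta> * \<bar>of_int j\<bar>)"
    using sinh_real_abs[of "\<delta> * of_int j"] assms by (simp add: abs_mult)
  ultimately show ?thesis
    using inverse_two_sinh_le[OF assms] by (simp add: logderiv_coeff_def abs_mult)
qed

lemma strip_summable_logderiv_coeff: "\<delta> > 0 \<Longrightarrow> strip_summable \<delta> (logderiv_coeff \<delta>)"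
  by (rule strip_summable_if_exp_bound[OF abs_logderiv_coeff_le])

lemma strip_summable_theta_coeff:
  assumes "\<delta> > 0"
  shows "strip_summable \<delta> (theta_coeff \<delta>)"
proof (rule strip_summable_if_exp_bound[of _ 1])
  fix j :: int
  have "\<bar>j\<bar> \<le> j ^ 2"
  proof (cases "j = 0")
    case False
    then have "\<bar>j\<bar> * 1 \<le> \<bar>j\<bar> * \<bar>j\<bar>" by (intro mult_left_mono) auto
    then show ?thesis by (simp add: power2_eq_square)
  qed simp
  then have "\<bar>of_int j :: real\<bar> \<le> of_int j ^ 2"
    by (metis of_int_abs of_int_le_iff of_int_power)
  then show "\<bar>theta_coeff \<delta> j\<bar> \<le> 1 * exp (- \<delta> * \<bar>of_int j\<bar>)"
    using assms by (simp add: theta_coeff_def)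
qed

lemma logderiv_coeff_mult_exp:
  assumes "\<delta> > 0"
  shows "logderiv_coeff \<delta> j * exp (2 * \<delta> * of_int j)
    = logderiv_coeff \<delta> j - alt_sign j * exp (\<delta> * of_int j) + (if j = 0 then 1 else 0)"
proof (cases "j = 0")
  case False
  let ?x = "\<delta> * of_int j"
  have "sinh ?x \<noteq> 0" using False assms by simp
  moreover have "exp (2 * \<delta> * of_int j) - 1 = 2 * sinh ?x * exp ?x"
    by (simp add: sinh_def field_simps flip: exp_add)
  ultimately show ?thesis
    using False by (simp add: logderiv_coeff_def field_simps)
qed (simp add: alt_sign_def)

lemma summable_on_logderiv_coeff_gauss:
  assumes "\<delta> > 0"
  shows "(\<lambda>j. logderiv_coeff \<delta> j * exp (- \<delta> * (x - of_int j)\<^sup>2)) summable_on UNIV"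
proof (rule summable_on_int_if_exp_bound[OF assms])
  fix j :: int
  have "\<bar>logderiv_coeff \<delta> j\<bar> * exp (- \<delta> * (x - of_int j)\<^sup>2) \<le> \<bar>logderiv_coeff \<delta> j\<bar> * 1"
    using assms by (intro mult_left_mono) auto
  then show "\<bar>logderiv_coeff \<delta> j * exp (- \<delta> * (x - of_int j)\<^sup>2)\<bar>
      \<le> 1 / (1 - exp (- 2 * \<delta>)) * exp (- \<delta> * \<bar>of_int j\<bar>)"
    using abs_logderiv_coeff_le[OF assms, of j] by (simp add: abs_mult)
qed

lemma summable_on_alt_sign_gauss:
  assumes "\<delta> > 0"
  shows "(\<lambda>j. alt_sign j * exp (\<delta> * of_int j - \<delta> * (x - of_int j)\<^sup>2)) summable_on UNIV"
proof (rule summable_on_int_if_exp_bound[OF assms, of _ "exp (\<delta> * (2 * \<bar>x\<bar> + 1))"])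
  fix j :: int
  have "2 * \<bar>x - of_int j\<bar> - 1 \<le> (x - of_int j)\<^sup>2"
    using zero_le_power2[of "\<bar>x - of_int j\<bar> - 1"] by (simp add: power2_eq_square algebra_simps)
  moreover have "\<bar>of_int j\<bar> \<le> \<bar>x - of_int j\<bar> + \<bar>x\<bar>"
    using abs_triangle_ineq[of "of_int j - x" x] by (simp add: abs_minus_commute)
  ultimately have "of_int j - (x - of_int j)\<^sup>2 \<le> (2 * \<bar>x\<bar> + 1) - \<bar>of_int j\<bar>"
    using abs_ge_self[of "of_int j :: real"] by smt
  then have "\<delta> * (of_int j - (x - of_int j)\<^sup>2) \<le> \<delta> * ((2 * \<bar>x\<bar> + 1) - \<bar>of_int j\<bar>)"
    by (rule mult_left_mono) (use assms in simp)
  then have "\<delta> * of_int j - \<delta> * (x - of_int j)\<^sup>2 \<le> \<delta> * (2 * \<bar>x\<bar> + 1) + - \<delta> * \<bar>of_int j\<bar>"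
    by (simp add: algebra_simps)
  then show "\<bar>alt_sign j * exp (\<delta> * of_int j - \<delta> * (x - of_int j)\<^sup>2)\<bar>
      \<le> exp (\<delta> * (2 * \<bar>x\<bar> + 1)) * exp (- \<delta> * \<bar>of_int j\<bar>)"
    by (simp add: abs_mult flip: exp_add)
qed

text \<open>The reflection \<open>j \<mapsto> 2N + 1 - j\<close> flips the sign of \<open>alt_sign\<close> and fixes the exponent.\<close>
lemma infsum_alt_sign_gauss_eq_0:
  "(\<Sum>\<^sub>\<infinity>j. alt_sign j * exp (\<delta> * of_int j - \<delta> * (of_int N - of_int j)\<^sup>2)) = 0"
proof (rule infsum_eq_0_if_antisymmetric[of _ "2 * N + 1"])
  fix j :: int
  have "\<delta> * of_int (2 * N + 1 - j) - \<delta> * (of_int N - of_int (2 * N + 1 - j))\<^sup>2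
      = \<delta> * of_int j - \<delta> * (of_int N - of_int j)\<^sup>2"
    by (simp add: power2_eq_square algebra_simps)
  then show "alt_sign (2 * N + 1 - j) * exp (\<delta> * of_int (2 * N + 1 - j)
      - \<delta> * (of_int N - of_int (2 * N + 1 - j))\<^sup>2)
    = - (alt_sign j * exp (\<delta> * of_int j - \<delta> * (of_int N - of_int j)\<^sup>2))"
    by (simp add: alt_sign_eq)
qed

lemma infsum_logderiv_coeff_gauss:
  assumes "\<delta> > 0"
  shows "(\<Sum>\<^sub>\<infinity>j. logderiv_coeff \<delta> j * exp (- \<delta> * (of_int N - of_int j)\<^sup>2))
    = of_int N * exp (- \<delta> * (of_int N)\<^sup>2)"
proof -
  define B where "B N = exp (\<delta> * (of_int N)\<^sup>2) *
    (\<Sum>\<^sub>\<infinity>j. logderiv_coeff \<delta> j * exp (- \<delta> * (of_int N - of_int j)\<^sup>2))" for N :: int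
  have B_succ: "B (N + 1) = B N + 1" for N
  proof -
    let ?n = "of_int N :: real"
    define t where "t j = logderiv_coeff \<delta> j * exp (- \<delta> * (?n - of_int j)\<^sup>2)" for j
    define r where "r j = alt_sign j * exp (\<delta> * of_int j - \<delta> * (?n - of_int j)\<^sup>2)" for j
    define e where "e j = (if j = 0 then 1 else 0 :: real)" for j :: int
    have "exp (\<delta> * (?n + 1)\<^sup>2) * (logderiv_coeff \<delta> j * exp (- \<delta> * (?n + 1 - of_int j)\<^sup>2))
        = exp (\<delta> * ?n\<^sup>2) * (t j - r j) + e j" for j
    proof -
      define G where "G = exp (\<delta> * ?n\<^sup>2) * exp (- \<delta> * (?n - of_int j)\<^sup>2)"
      have "exp (\<delta> * (?n + 1)\<^sup>2) * exp (- \<delta> * (?n + 1 - of_int j)\<^sup>2) = exp (2 * \<delta> * of_int j) * G"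
        by (simp add: G_def power2_eq_square algebra_simps flip: exp_add)
      then have "exp (\<delta> * (?n + 1)\<^sup>2) * (logderiv_coeff \<delta> j * exp (- \<delta> * (?n + 1 - of_int j)\<^sup>2))
          = (logderiv_coeff \<delta> j * exp (2 * \<delta> * of_int j)) * G"
        by (metis mult.assoc mult.left_commute)
      also have "\<dots> = (logderiv_coeff \<delta> j - alt_sign j * exp (\<delta> * of_int j) + e j) * G"
        by (simp add: logderiv_coeff_mult_exp[OF assms] e_def)
      also have "\<dots> = exp (\<delta> * ?n\<^sup>2) * (t j - r j) + e j"
      proof -
        have "exp (\<delta> * of_int j - \<delta> * (?n - of_int j)\<^sup>2) = exp (\<delta> * of_int j) * exp (- \<delta> * (?n - of_int j)\<^sup>2)"
          by (simp flip: exp_add)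
        moreover have "e j * G = e j"
          by (simp add: e_def G_def flip: exp_add)
        ultimately show ?thesis
          by (simp add: t_def r_def G_def algebra_simps)
      qed
      finally show ?thesis .
    qed
    then have "B (N + 1) = (\<Sum>\<^sub>\<infinity>j. exp (\<delta> * ?n\<^sup>2) * (t j + - r j) + e j)"
      unfolding B_def by (simp flip: infsum_cmult_right')
    also have "\<dots> = exp (\<delta> * ?n\<^sup>2) * infsum t UNIV + 1"
    proof (rule infsumI)
      have "(t has_sum infsum t UNIV) UNIV"
        unfolding t_def by (intro has_sum_infsum summable_on_logderiv_coeff_gauss assms)
      moreover have "((\<lambda>j. - r j) has_sum 0) UNIV"
        using has_sum_infsum[OF summable_on_alt_sign_gauss[OF assms, of ?n]]
          infsum_alt_sign_gauss_eq_0[of \<delta> N] by (simp add: r_def has_sum_uminus)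
      moreover have "(e has_sum 1) UNIV"
        by (rule has_sum_finite_neutralI[of "{0}"]) (auto simp: e_def)
      ultimately show "((\<lambda>j. exp (\<delta> * ?n\<^sup>2) * (t j + - r j) + e j)
          has_sum (exp (\<delta> * ?n\<^sup>2) * infsum t UNIV + 1)) UNIV"
        using has_sum_add[OF has_sum_cmult_right[OF has_sum_add]] by fastforce
    qed
    also have "\<dots> = B N + 1"
      by (simp add: B_def t_def[abs_def])
    finally show ?thesis .
  qed
  have "B 0 = 0"
    unfolding B_def
    by (simp, rule infsum_eq_0_if_antisymmetric[of _ 0]) (simp add: logderiv_coeff_minus)
  then have "B N = of_int N"
  proof (induction N rule: int_induct[where k = 0])
    case (step2 i)
    then show ?case using B_succ[of "i - 1"] by simp
  qed (simp_all add: B_succ)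
  then show ?thesis
    by (simp add: B_def exp_minus field_simps)
qed

section \<open>Cumulants of the discrete theta law\<close>

lemma exp_series_theta_mult_logderiv:
  assumes "\<delta> > 0" "\<bar>u\<bar> < \<delta>"
  shows "exp_series (theta_coeff \<delta>) u * exp_series (logderiv_coeff \<delta>) u
    = exp_series (\<lambda>j. of_int j * theta_coeff \<delta> j) u"
proof -
  have "exp_series (theta_coeff \<delta>) u * exp_series (logderiv_coeff \<delta>) u
      = (\<Sum>\<^sub>\<infinity>n. \<Sum>\<^sub>\<infinity>j. theta_coeff \<delta> (n - j) * exp (of_int (n - j) * u)
          * (logderiv_coeff \<delta> j * exp (of_int j * u)))"
    unfolding exp_series_def
    by (intro infsum_mult_eq_infsum_convolution
        strip_summable_summable_on[OF strip_summable_theta_coeff[OF assms(1)] assms(2)]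
        strip_summable_summable_on[OF strip_summable_logderiv_coeff[OF assms(1)] assms(2)])
  also have "\<dots> = (\<Sum>\<^sub>\<infinity>n. exp (of_int n * u)
      * (\<Sum>\<^sub>\<infinity>j. logderiv_coeff \<delta> j * exp (- \<delta> * (of_int n - of_int j)\<^sup>2)))"
  proof -
    have "exp (of_int (n - j) * u) * exp (of_int j * u) = exp (of_int n * u)" for n j :: int
      by (simp add: algebra_simps flip: exp_add)
    then have term_eq: "theta_coeff \<delta> (n - j) * exp (of_int (n - j) * u)
        * (logderiv_coeff \<delta> j * exp (of_int j * u))
      = exp (of_int n * u) * (logderiv_coeff \<delta> j * exp (- \<delta> * (of_int n - of_int j)\<^sup>2))" for n j
      by (simp add: theta_coeff_def mult_ac)
    show ?thesis by (simp only: term_eq infsum_cmult_right')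
  qed
  also have "\<dots> = exp_series (\<lambda>j. of_int j * theta_coeff \<delta> j) u"
    unfolding infsum_logderiv_coeff_gauss[OF assms(1)]
    by (simp add: exp_series_def theta_coeff_def mult_ac)
  finally show ?thesis .
qed

lemma exp_series_theta_pos:
  assumes "\<delta> > 0" "\<bar>u\<bar> < \<delta>"
  shows "exp_series (theta_coeff \<delta>) u > 0"
proof -
  let ?f = "\<lambda>j. theta_coeff \<delta> j * exp (of_int j * u)"
  have "?f summable_on UNIV"
    by (rule strip_summable_summable_on[OF strip_summable_theta_coeff[OF assms(1)] assms(2)])
  then have "infsum ?f {0} \<le> infsum ?f UNIV"
    by (intro infsum_mono2) (auto simp: theta_coeff_def)
  then show ?thesis by (simp add: exp_series_def theta_coeff_def)
qed

lemma has_real_derivative_ln_exp_series_theta: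
  assumes "\<delta> > 0" "\<bar>u\<bar> < \<delta>"
  shows "((\<lambda>v. ln (exp_series (theta_coeff \<delta>) v)) has_real_derivative exp_series (logderiv_coeff \<delta>) u) (at u)"
proof -
  have pos: "exp_series (theta_coeff \<delta>) u > 0" by (rule exp_series_theta_pos[OF assms])
  have "((\<lambda>v. ln (exp_series (theta_coeff \<delta>) v)) has_real_derivative
      1 / exp_series (theta_coeff \<delta>) u * exp_series (\<lambda>j. of_int j * theta_coeff \<delta> j) u) (at u)"
    by (rule DERIV_chain2[OF DERIV_ln_divide[OF pos] has_real_derivative_exp_series[OF
          strip_summable_theta_coeff[OF assms(1)] assms(2)]])
  moreover have "1 / exp_series (theta_coeff \<delta>) u * exp_series (\<lambda>j. of_int j * theta_coeff \<delta> j) u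
      = exp_series (logderiv_coeff \<delta>) u"
    using exp_series_theta_mult_logderiv[OF assms] pos by (simp add: field_simps)
  ultimately show ?thesis by (rule DERIV_cong)
qed

lemma theta_mgf_exp:
  "theta_mgf (exp (- \<delta>)) u = exp_series (theta_coeff \<delta>) u / exp_series (theta_coeff \<delta>) 0"
proof -
  have pow: "exp (- \<delta>) ^ nat (p\<^sup>2) = theta_coeff \<delta> p" for p
    by (simp add: theta_coeff_def flip: exp_of_nat_mult)
  then have "theta3 (exp (- \<delta>)) = exp_series (theta_coeff \<delta>) 0"
    by (simp add: theta3_def exp_series_def)
  then have "theta_mgf (exp (- \<delta>)) u
      = (\<Sum>\<^sub>\<infinity>j. (1 / exp_series (theta_coeff \<delta>) 0) * (theta_coeff \<delta> j * exp (of_int j * u)))"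
    unfolding theta_mgf_def theta_pmf_def pow by (simp add: mult.commute)
  then show ?thesis
    unfolding infsum_cmult_right' by (simp add: exp_series_def)
qed

lemma theta_cumulant_Suc:
  assumes "\<delta> > 0"
  shows "theta_cumulant (exp (- \<delta>)) (Suc n) = (\<Sum>\<^sub>\<infinity>j. of_int j ^ n * logderiv_coeff \<delta> j)"
proof -
  let ?\<Theta> = "exp_series (theta_coeff \<delta>)"
  define f where "f = (\<lambda>u. ln (theta_mgf (exp (- \<delta>)) u))"
  have deriv_f: "deriv f v = exp_series (logderiv_coeff \<delta>) v" if "v \<in> ball 0 \<delta>" for v
  proof -
    have "eventually (\<lambda>x. x \<in> ball 0 \<delta>) (nhds v)"
      using that by (intro eventually_nhds_in_open) auto
    then have "eventually (\<lambda>x. f x = ln (?\<Theta> x) - ln (?\<Theta> 0)) (nhds v)"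
    proof eventually_elim
      case (elim x)
      then have "?\<Theta> x > 0" "?\<Theta> 0 > 0"
        using assms by (auto intro: exp_series_theta_pos)
      then show ?case by (simp add: f_def theta_mgf_exp ln_div)
    qed
    moreover have "((\<lambda>x. ln (?\<Theta> x) - ln (?\<Theta> 0)) has_real_derivative exp_series (logderiv_coeff \<delta>) v) (at v)"
      using DERIV_diff[OF has_real_derivative_ln_exp_series_theta[OF assms] DERIV_const] that by simp
    ultimately show ?thesis
      using deriv_cong_ev[OF _ refl] DERIV_imp_deriv by metis
  qed
  have "eventually (\<lambda>v. v \<in> ball 0 \<delta>) (nhds 0)"
    using assms by (intro eventually_nhds_in_open) auto
  then have "eventually (\<lambda>v. deriv f v = exp_series (logderiv_coeff \<delta>) v) (nhds 0)"
    by eventually_elim (rule deriv_f)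
  then have "theta_cumulant (exp (- \<delta>)) (Suc n) = (deriv ^^ n) (exp_series (logderiv_coeff \<delta>)) 0"
    unfolding theta_cumulant_def funpow_Suc_right o_apply f_def[symmetric]
    by (rule higher_deriv_cong_ev) simp
  also have "\<dots> = exp_series (\<lambda>j. of_int j ^ n * logderiv_coeff \<delta> j) 0"
    by (rule higher_deriv_exp_series[OF strip_summable_logderiv_coeff]) (use assms in auto)
  finally show ?thesis by (simp add: exp_series_def)
qed

lemma theta_cumulant_odd:
  assumes "\<delta> > 0"
  shows "theta_cumulant (exp (- \<delta>)) (2 * n + 1) = 0"
proof -
  have "(\<Sum>\<^sub>\<infinity>j. of_int j ^ (2 * n) * logderiv_coeff \<delta> j) = 0"
    by (rule infsum_eq_0_if_antisymmetric[of _ 0]) (simp add: logderiv_coeff_minus)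
  then show ?thesis
    using theta_cumulant_Suc[OF assms, of "2 * n"] by simp
qed

lemma theta_cumulant_even:
  assumes "\<delta> > 0" "n \<ge> 1"
  shows "theta_cumulant (exp (- \<delta>)) (2 * n)
    = (\<Sum>\<^sub>\<infinity>m\<in>{1::nat..}. (-1) ^ (m - 1) * real m ^ (2 * n - 1) / sinh (\<delta> * real m))"
proof -
  define g where "g j = of_int j ^ (2 * n - 1) * logderiv_coeff \<delta> j" for j
  have "theta_cumulant (exp (- \<delta>)) (2 * n) = infsum g UNIV"
    using theta_cumulant_Suc[OF assms(1), of "2 * n - 1"] assms(2) by (simp add: g_def[abs_def])
  also have "\<dots> = 2 * (\<Sum>\<^sub>\<infinity>m\<in>{1::nat..}. g (int m))"
  proof (rule infsum_int_even)
    show "g summable_on UNIV"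
      using strip_summable_summable_on[OF strip_summable_index_power[OF
          strip_summable_logderiv_coeff[OF assms(1)]], of 0] assms(1)
      by (simp add: g_def[abs_def])
    show "g (- j) = g j" for j
      using assms(2) by (simp add: g_def logderiv_coeff_minus)
  qed (simp add: g_def)
  also have "\<dots> = (\<Sum>\<^sub>\<infinity>m\<in>{1::nat..}. (-1) ^ (m - 1) * real m ^ (2 * n - 1) / sinh (\<delta> * real m))"
  proof -
    have "2 * g (int m) = (-1) ^ (m - 1) * real m ^ (2 * n - 1) / sinh (\<delta> * real m)" if "m \<ge> 1" for m
    proof -
      have "(-1 :: real) ^ m = - ((-1) ^ (m - 1))"
        using that by (cases m) simp_all
      then show ?thesis by (simp add: g_def logderiv_coeff_def alt_sign_def mult_ac)
    qed
    then show ?thesis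
      by (subst infsum_cmult_right'[symmetric]) (rule infsum_cong, simp)
  qed
  finally show ?thesis .
qed

lemma theta_cumulant_at_one: "theta_cumulant 1 n = 0"
proof -
  have "theta3 1 = 0"
    by (simp add: theta3_def infsum_diverge_constant)
  then have "(\<lambda>u. ln (theta_mgf 1 u)) = (\<lambda>u. 0)"
    by (simp add: theta_mgf_def theta_pmf_def)
  moreover have "(deriv ^^ n) (\<lambda>u::real. 0 :: real) = (\<lambda>u. 0)"
    by (induction n) auto
  ultimately show ?thesis by (simp add: theta_cumulant_def)
qed

lemma ellK_nonneg:
  assumes "0 \<le> x" "x \<le> 1"
  shows "0 \<le> ellK x"
proof (cases "(\<lambda>t. 1 / (sqrt (1 - t\<^sup>2) * sqrt (1 - x\<^sup>2 * t\<^sup>2))) integrable_on {0..1}")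
  case True
  show ?thesis unfolding ellK_def
  proof (rule integral_nonneg[OF True])
    fix t :: real
    assume "t \<in> {0..1}"
    then have "t\<^sup>2 \<le> 1" "x\<^sup>2 * t\<^sup>2 \<le> 1"
      using assms by (simp_all add: power_le_one mult_le_one)
    then show "0 \<le> 1 / (sqrt (1 - t\<^sup>2) * sqrt (1 - x\<^sup>2 * t\<^sup>2))" by simp
  qed
qed (simp add: ellK_def not_integrable_integral)

theorem mainTheorem3:
  fixes k :: real
  assumes "0 < k" and "k < 1"
  defines "k' \<equiv> sqrt (1 - k\<^sup>2)"
  defines "c \<equiv> ellK k' / ellK k"
  defines "q \<equiv> exp (- pi * c)"
  shows "(\<forall>n::nat. theta_cumulant q (2 * n + 1) = 0) \<and>
         (\<forall>n::nat. n \<ge> 1 \<longrightarrow>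
            theta_cumulant q (2 * n) =
              (\<Sum>\<^sub>\<infinity>m\<in>{1::nat..}. (-1) ^ (m - 1) * real m ^ (2 * n - 1) / sinh (c * real m * pi)))"
proof -
  have "k\<^sup>2 < 1"
    using mult_strict_mono[of k 1 k 1] assms(1,2) by (simp add: power2_eq_square)
  then have "0 \<le> k'" "k' \<le> 1"
    by (auto simp: k'_def)
  then have "c \<ge> 0"
    using ellK_nonneg[of k'] ellK_nonneg[of k] assms(1,2) by (simp add: c_def)
  show ?thesis
  proof (cases "c = 0")
    case True
    \<comment> \<open>excluded by \<open>K > 0\<close>, which would need integrability of the singular integrand;
      here \<open>q = 1\<close>, and both sides vanish by junk values (\<open>\<theta>\<^sub>3(1)\<close> diverges, \<open>sinh 0 = 0\<close>)\<close>
    then show ?thesis by (simp add: q_def theta_cumulant_at_one)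
  next
    case False
    with \<open>c \<ge> 0\<close> have "pi * c > 0" by simp
    then show ?thesis
      using theta_cumulant_odd theta_cumulant_even by (simp add: q_def mult_ac)
  qed
qed

end
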